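(* For every $\lambda>\lambda^*$, the function $F_\lambda(e)=F(\lambda,e)$ has exactly two roots in $I_\lambda$, both lying in $I_\lambda\cap(-\infty,0)$, and $e(\lambda)$ is the larger of the two, equivalently the root at which $\partial_eF(\lambda,\cdot)>0$.
   Context: Standing setup. Let $\gamma>0$; let $a_1,\dots,a_p>0$ with weights $\omega_i>0$, $\sum_i\omega_i=1$, and $b_1,\dots,b_n>0$ with weights $\pi_j>0$, $\sum_j\pi_j=1$; put $a^*=\max_i a_i$, $b^*=\max_j b_j$. Let $\mu$ be the limiting spectral distribution of $\mathbf{N}\mathbf{N}^T$ where $\mathbf{N}=\mathbf{A}^{1/2}\mathbf{G}\mathbf{B}^{1/2}$ is $k\times l$, $\mathbf{G}$ has iid mean-zero entries of variance $1/l$, $k/l\to\gamma$, and the spectral distributions of $\mathbf{A},\mathbf{B}$ converge to $\nu=\sum_i\omega_i\delta_{a_i}$ and $\underline{\nu}=\sum_j\pi_j\delta_{b_j}$. $\mu$ is a compactly supported probability measure on $[0,\infty)$; $\lambda^*>0$ is the right endpoint of its support, and $s(\lambda)=\int\frac{d\mu(t)}{t-\lambda}$ for $\lambda>\lambda^*$. Define $G(e)=\sum_{j=1}^n\frac{b_j\pi_j}{1+\gamma b_j e}$, $J=\{e: e>-1/(\gamma b^* )\}$, for $\lambda>0$, $I_\lambda=\{e\in J: G(e)<\lambda/a^*\}$, and $F(\lambda,e)=e-\sum_{i=1}^p\frac{a_i\omega_i}{a_iG(e)-\lambda}$. It is known (master equations) that there is a smooth real function $e(\lambda)$ on $(\lambda^*,\infty)$,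 never equal to a pole $-1/(\gamma b_j)$ of $G$ and with $a_iG(e(\lambda))\ne\lambda$, satisfying $s(\lambda)=\sum_{i=1}^p\frac{\omega_i}{a_iG(e(\lambda))-\lambda}$ and $F(\lambda,e(\lambda))=0$. *)

theory Defs
  imports "HOL-Probability.Probability"
begin

definition msupport :: "real measure \<Rightarrow> real set" where
  "msupport M = {x. \<forall>r>0. emeasure M (ball x r) > 0}"

definition stieltjes :: "real measure \<Rightarrow> real \<Rightarrow> real" where
  "stieltjes M lam = (\<integral>t. 1 / (t - lam) \<partial>M)"

definition Gfun :: "real \<Rightarrow> nat \<Rightarrow> (nat \<Rightarrow> real) \<Rightarrow> (nat \<Rightarrow> real) \<Rightarrow> real \<Rightarrow> real" where
  "Gfun \<gamma> n b \<pi> e = (\<Sum>j\<in>{1..n}. b j * \<pi> j / (1 + \<gamma> * b j * e))"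

definition Ffun :: "real \<Rightarrow> nat \<Rightarrow> (nat \<Rightarrow> real) \<Rightarrow> (nat \<Rightarrow> real) \<Rightarrow> nat \<Rightarrow> (nat \<Rightarrow> real) \<Rightarrow> (nat \<Rightarrow> real)
                     \<Rightarrow> real \<Rightarrow> real \<Rightarrow> real" where
  "Ffun \<gamma> p a \<omega> n b \<pi> lam e =
     e - (\<Sum>i\<in>{1..p}. a i * \<omega> i / (a i * Gfun \<gamma> n b \<pi> e - lam))"

definition Jset :: "real \<Rightarrow> nat \<Rightarrow> (nat \<Rightarrow> real) \<Rightarrow> real set" where
  "Jset \<gamma> n b = {e. e > - 1 / (\<gamma> * Max (b ` {1..n}))}"

definition Iset :: "real \<Rightarrow> nat \<Rightarrow> (nat \<Rightarrow> real) \<Rightarrow> nat \<Rightarrow> (nat \<Rightarrow> real) \<Rightarrow> (nat \<Rightarrow> real) \<Rightarrow> real \<Rightarrow> real set" where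
  "Iset \<gamma> p a n b \<pi> lam =
     {e \<in> Jset \<gamma> n b. Gfun \<gamma> n b \<pi> e < lam / Max (a ` {1..p})}"

end

theory Submission
  imports Defs
begin

text \<open>Write \<open>F\<^sub>\<lambda> = F(\<lambda>,\<cdot>)\<close>. On \<open>I\<^sub>\<lambda>\<close> every denominator \<open>a\<^sub>iG(e) - \<lambda>\<close> is negative and
  \<open>G\<close> decreases, so \<open>\<partial>\<^sub>eF\<close> is strictly increasing: \<open>F\<^sub>\<lambda>\<close> is strictly convex on the
  half-line \<open>I\<^sub>\<lambda>\<close> and has at most two roots there, the smaller with \<open>\<partial>\<^sub>eF < 0\<close>
  and the larger with \<open>\<partial>\<^sub>eF > 0\<close>. Moreover \<open>F\<^sub>\<lambda> \<to> +\<infinity>\<close> at the left end of \<open>I\<^sub>\<lambda>\<close>,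
  so a root with \<open>\<partial>\<^sub>eF > 0\<close> forces a second, smaller one.

  It remains to see that \<open>e(\<lambda>) \<in> I\<^sub>\<lambda>\<close> with \<open>\<partial>\<^sub>eF(\<lambda>,e(\<lambda>)) > 0\<close>. Differentiating
  \<open>F(\<lambda>,e(\<lambda>)) = 0\<close> gives \<open>e'(\<lambda>) \<partial>\<^sub>eF(\<lambda>,e(\<lambda>)) = \<Sum>\<^sub>i a\<^sub>i\<omega>\<^sub>i/(a\<^sub>iG - \<lambda>)\<^sup>2 > 0\<close>, so
  \<open>\<partial>\<^sub>eF\<close> never vanishes along the curve; neither do \<open>1 + \<gamma>b\<^sup>*e(\<lambda>)\<close> and
  \<open>\<lambda> - a\<^sup>*G(e(\<lambda>))\<close>. By continuity all three keep the sign they have for one large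
  \<open>\<lambda>\<close>, where \<open>e(\<lambda>) = O(1/\<lambda>)\<close> because \<open>e G(e) = 1 + \<lambda>s(\<lambda>)\<close> and
  \<open>-2 \<le> \<lambda>s(\<lambda>) \<le> 0\<close> once \<open>\<lambda> \<ge> 2\<lambda>\<^sup>*\<close>.\<close>

section \<open>Real functions on half-lines\<close>

lemma continuous_on_greaterThan_pos:
  fixes f :: "real \<Rightarrow> real"
  assumes cont: "continuous_on {L<..} f" and nz: "\<forall>x>L. f x \<noteq> 0"
    and x0: "x0 > L" "f x0 > 0" and x: "x > L"
  shows "f x > 0"
proof (rule ccontr)
  assume "\<not> f x > 0"
  have "connected (f ` {L<..})"
    using cont by (intro connected_continuous_image) auto
  moreover have "f x \<in> f ` {L<..}" "f x0 \<in> f ` {L<..}" using x x0(1) by auto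
  ultimately have "0 \<in> f ` {L<..}"
    using \<open>\<not> f x > 0\<close> x0(2) unfolding connected_iff_interval by (meson less_imp_le not_le)
  then show False using nz by auto
qed

lemma strict_mono_deriv_signs:
  fixes f f' :: "real \<Rightarrow> real"
  assumes der: "\<forall>x\<in>S. (f has_real_derivative f' x) (at x)"
    and up: "\<forall>x\<in>S. {x..} \<subseteq> S" and mono: "strict_mono_on S f'"
    and xS: "x \<in> S" and xy: "x < y" and fxy: "f x = f y"
  shows "f' x < 0 \<and> 0 < f' y"
proof -
  have S: "z \<in> S" if "x \<le> z" for z using up xS that by auto
  have der': "(f has_real_derivative f' z) (at z)" if "x \<le> z" for z
    using der S[OF that] by blast
  have "isCont f z" if "x \<le> z" for z using DERIV_isCont[OF der'[OF that]] .
  then have "continuous_on {x..y} f" by (intro continuous_at_imp_continuous_on) auto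
  moreover have "f differentiable (at z)" if "x < z" for z
    using der' that real_differentiable_def less_imp_le by blast
  ultimately obtain z where z: "x < z" "z < y" "DERIV f z :> 0"
    using Rolle[OF xy fxy] by blast
  have zS: "z \<in> S" and yS: "y \<in> S" using S z(1) xy by auto
  have "f' z = 0" using DERIV_unique[OF der' z(3)] z(1) by simp
  then show ?thesis
    using strict_mono_onD[OF mono xS zS z(1)] strict_mono_onD[OF mono zS yS z(2)] by simp
qed

lemma strict_mono_deriv_no_three_zeros:
  fixes f f' :: "real \<Rightarrow> real"
  assumes der: "\<forall>x\<in>S. (f has_real_derivative f' x) (at x)"
    and up: "\<forall>x\<in>S. {x..} \<subseteq> S" and mono: "strict_mono_on S f'"
    and xS: "x \<in> S" and xyz: "x < y" "y < z" and f: "f x = 0" "f y = 0" "f z = 0"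
  shows False
proof -
  have yS: "y \<in> S" using up xS less_imp_le[OF xyz(1)] by auto
  have "0 < f' y" using strict_mono_deriv_signs[OF der up mono xS xyz(1)] f by simp
  moreover have "f' y < 0" using strict_mono_deriv_signs[OF der up mono yS xyz(2)] f by simp
  ultimately show False by simp
qed

section \<open>Stieltjes transform of a measure bounded above\<close>

lemma AE_le_of_msupport_le:
  fixes M :: "real measure"
  assumes sets: "sets M = sets borel" and le: "\<forall>t\<in>msupport M. t \<le> L"
  shows "AE t in M. t \<le> L"
proof -
  define N where "N = {ball x r | x r. r > 0 \<and> emeasure M (ball x r) = 0}"
  obtain N' where N': "N' \<subseteq> N" "countable N'" "\<Union>N' = \<Union>N"
    using Lindelof[of N] unfolding N_def by blast
  have "{L<..} \<subseteq> \<Union>N"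
  proof
    fix x assume "x \<in> {L<..}"
    then have "x \<notin> msupport M" using le by force
    then obtain r where "r > 0" "emeasure M (ball x r) = 0"
      unfolding msupport_def by (auto simp: not_gr_zero)
    then show "x \<in> \<Union>N" unfolding N_def by (blast intro: centre_in_ball[THEN iffD2])
  qed
  moreover have "\<Union>N' \<in> null_sets M"
  proof (rule null_sets_UN'[of N' "\<lambda>S. S", simplified])
    show "countable N'" by fact
    fix S assume "S \<in> N'"
    then obtain x r where "S = ball x r" "emeasure M (ball x r) = 0"
      using N' unfolding N_def by auto
    then show "S \<in> null_sets M" using sets by auto
  qed
  ultimately show ?thesis using N'(3) by (intro AE_I'[of "\<Union>N'"]) auto
qed

lemma stieltjes_bounds:
  fixes M :: "real measure"
  assumes prob: "prob_space M" and sets: "sets M = sets borel"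
    and le: "\<forall>t\<in>msupport M. t \<le> L" and lam: "L < lam"
  shows "- 1 / (lam - L) \<le> stieltjes M lam" "stieltjes M lam \<le> 0"
proof -
  interpret prob_space M by fact
  have bound: "AE t in M. - 1 / (lam - L) \<le> 1 / (t - lam) \<and> 1 / (t - lam) \<le> 0"
    using AE_le_of_msupport_le[OF sets le]
  proof eventually_elim
    case (elim t)
    then have "lam - L \<le> lam - t" "0 < lam - t" using lam by auto
    then have "1 / (lam - t) \<le> 1 / (lam - L)" using lam by (intro divide_left_mono) auto
    moreover have "1 / (t - lam) = - (1 / (lam - t))" by (simp add: minus_divide_right)
    ultimately show ?case using \<open>0 < lam - t\<close> by simp
  qed
  have "(\<lambda>t. 1 / (t - lam)) \<in> borel_measurable M"
    unfolding measurable_cong_sets[OF sets refl] by measurable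
  moreover have "AE t in M. norm (1 / (t - lam)) \<le> 1 / (lam - L)"
  proof -
    have norm_le: "norm v \<le> 1 / (lam - L)" if "- 1 / (lam - L) \<le> v" "v \<le> 0" for v :: real
      using that lam by (simp add: abs_if)
    show ?thesis using bound by eventually_elim (use norm_le in blast)
  qed
  ultimately have int: "integrable M (\<lambda>t. 1 / (t - lam))"
    by (intro integrable_const_bound)
  have "(\<integral>t. - 1 / (lam - L) \<partial>M) \<le> (\<integral>t. 1 / (t - lam) \<partial>M)"
    using bound by (intro integral_mono_AE[OF _ int]) auto
  moreover have "(\<integral>t. 1 / (t - lam) \<partial>M) \<le> (\<integral>t. 0 \<partial>M)"
    using bound by (intro integral_mono_AE[OF int]) auto
  ultimately show "- 1 / (lam - L) \<le> stieltjes M lam" "stieltjes M lam \<le> 0"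
    unfolding stieltjes_def by (simp_all add: prob_space)
qed

lemma abs_one_plus_scaled_stieltjes_le:
  fixes M :: "real measure"
  assumes prob: "prob_space M" and sets: "sets M = sets borel"
    and le: "\<forall>t\<in>msupport M. t \<le> L" and L: "L > 0" and lam: "2 * L \<le> lam"
  shows "\<bar>1 + lam * stieltjes M lam\<bar> \<le> 1"
proof -
  have lamL: "L < lam" using L lam by simp
  note s = stieltjes_bounds[OF prob sets le lamL]
  have "- 2 \<le> - lam / (lam - L)" using lam lamL by (simp add: field_simps)
  also have "\<dots> = lam * (- 1 / (lam - L))" by simp
  also have "\<dots> \<le> lam * stieltjes M lam" using s(1) lamL L by (intro mult_left_mono) auto
  finally have "- 2 \<le> lam * stieltjes M lam" .
  moreover have "lam * stieltjes M lam \<le> 0" using s(2) lamL L by (simp add: mult_nonneg_nonpos)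
  ultimately show ?thesis by linarith
qed

section \<open>Convexity of \<open>F\<close> in \<open>e\<close> on \<open>I\<^sub>\<lambda>\<close>\<close>

locale master_equation =
  fixes \<gamma> :: real and p n :: nat and a \<omega> b \<pi> :: "nat \<Rightarrow> real"
  assumes gamma_pos: "\<gamma> > 0"
    and a_pos: "\<forall>i\<in>{1..p}. a i > 0" and omega_pos: "\<forall>i\<in>{1..p}. \<omega> i > 0"
    and omega_sum: "(\<Sum>i\<in>{1..p}. \<omega> i) = 1"
    and b_pos: "\<forall>j\<in>{1..n}. b j > 0" and pi_pos: "\<forall>j\<in>{1..n}. \<pi> j > 0"
    and pi_sum: "(\<Sum>j\<in>{1..n}. \<pi> j) = 1"
begin

abbreviation G where "G \<equiv> Gfun \<gamma> n b \<pi>"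
abbreviation F where "F \<equiv> Ffun \<gamma> p a \<omega> n b \<pi>"
abbreviation J where "J \<equiv> Jset \<gamma> n b"
abbreviation I where "I \<equiv> Iset \<gamma> p a n b \<pi>"

definition astar :: real where "astar = Max (a ` {1..p})"
definition bstar :: real where "bstar = Max (b ` {1..n})"

definition K :: "real \<Rightarrow> real" where
  "K e = (\<Sum>j\<in>{1..n}. \<gamma> * b j ^ 2 * \<pi> j / (1 + \<gamma> * b j * e) ^ 2)"

definition dF :: "real \<Rightarrow> real \<Rightarrow> real" where
  "dF lam e = 1 - (\<Sum>i\<in>{1..p}. a i ^ 2 * \<omega> i * K e / (a i * G e - lam) ^ 2)"

lemma a_indices_nonempty: "{1..p} \<noteq> {}"
proof
  assume "{1..p} = {}" then show False using omega_sum by simp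
qed

lemma b_indices_nonempty: "{1..n} \<noteq> {}"
proof
  assume "{1..n} = {}" then show False using pi_sum by simp
qed

lemma astar_attained: obtains i where "i \<in> {1..p}" "a i = astar"
proof -
  have "astar \<in> a ` {1..p}" unfolding astar_def using a_indices_nonempty by (intro Max_in) auto
  then show ?thesis using that by auto
qed

lemma bstar_attained: obtains j where "j \<in> {1..n}" "b j = bstar"
proof -
  have "bstar \<in> b ` {1..n}" unfolding bstar_def using b_indices_nonempty by (intro Max_in) auto
  then show ?thesis using that by auto
qed

lemma le_astar: "i \<in> {1..p} \<Longrightarrow> a i \<le> astar"
  unfolding astar_def by simp

lemma le_bstar: "j \<in> {1..n} \<Longrightarrow> b j \<le> bstar"
  unfolding bstar_def by simp

lemma astar_pos: "astar > 0"
  using a_pos by (metis astar_attained)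

lemma bstar_pos: "bstar > 0"
  using b_pos by (metis bstar_attained)

lemma mem_J_iff: "e \<in> J \<longleftrightarrow> 1 + \<gamma> * bstar * e > 0"
proof -
  have "\<gamma> * bstar > 0" using gamma_pos bstar_pos by simp
  then have "- 1 / (\<gamma> * bstar) < e \<longleftrightarrow> - 1 < e * (\<gamma> * bstar)"
    by (simp only: divide_less_eq) auto
  also have "\<dots> \<longleftrightarrow> 1 + \<gamma> * bstar * e > 0"
    by (simp add: ac_simps) linarith
  finally show ?thesis unfolding Jset_def bstar_def[symmetric] by simp
qed

lemma J_upward_closed: "x \<in> J \<Longrightarrow> x \<le> y \<Longrightarrow> y \<in> J"
  unfolding Jset_def by auto

lemma denom_pos_on_J:
  assumes "e \<in> J" "j \<in> {1..n}"
  shows "1 + \<gamma> * b j * e > 0"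
proof (cases "e \<ge> 0")
  case True
  have "b j > 0" using b_pos assms(2) by simp
  then have "0 \<le> \<gamma> * b j * e" using gamma_pos True by simp
  then show ?thesis by linarith
next
  case False
  then have "\<gamma> * bstar * e \<le> \<gamma> * b j * e"
    using gamma_pos le_bstar[OF assms(2)] by (simp add: mult_le_cancel_right)
  moreover have "1 + \<gamma> * bstar * e > 0" using assms(1) mem_J_iff by simp
  ultimately show ?thesis by linarith
qed

lemma G_has_derivative:
  assumes "\<forall>j\<in>{1..n}. 1 + \<gamma> * b j * e \<noteq> 0"
  shows "(G has_real_derivative - K e) (at e)"
proof -
  have "((\<lambda>e. \<Sum>j\<in>{1..n}. b j * \<pi> j / (1 + \<gamma> * b j * e)) has_real_derivative
        (\<Sum>j\<in>{1..n}. - (\<gamma> * b j ^ 2 * \<pi> j / (1 + \<gamma> * b j * e) ^ 2))) (at e)"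
  proof (rule DERIV_sum)
    fix j assume "j \<in> {1..n}"
    then have "1 + \<gamma> * b j * e \<noteq> 0" using assms by auto
    then show "((\<lambda>e. b j * \<pi> j / (1 + \<gamma> * b j * e)) has_real_derivative
        - (\<gamma> * b j ^ 2 * \<pi> j / (1 + \<gamma> * b j * e) ^ 2)) (at e)"
      by (auto intro!: derivative_eq_intros simp: power2_eq_square field_simps)
  qed
  then show ?thesis unfolding K_def Gfun_def[abs_def] by (simp add: sum_negf)
qed

lemma F_has_derivative:
  assumes "\<forall>j\<in>{1..n}. 1 + \<gamma> * b j * e \<noteq> 0" and "\<forall>i\<in>{1..p}. a i * G e \<noteq> lam"
  shows "(F lam has_real_derivative dF lam e) (at e)"
proof -
  have "((\<lambda>e. e - (\<Sum>i\<in>{1..p}. a i * \<omega> i / (a i * G e - lam))) has_real_derivative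
        1 - (\<Sum>i\<in>{1..p}. a i ^ 2 * \<omega> i * K e / (a i * G e - lam) ^ 2)) (at e)"
  proof (intro derivative_intros DERIV_sum)
    fix i assume "i \<in> {1..p}"
    then have "a i * G e - lam \<noteq> 0" using assms(2) by auto
    then have "((\<lambda>e. a i * \<omega> i / (a i * G e - lam)) has_real_derivative
        - (a i * \<omega> i) * (a i * - K e) / (a i * G e - lam) ^ 2) (at e)"
      by (auto intro!: derivative_eq_intros G_has_derivative[OF assms(1)]
          simp: power2_eq_square field_simps)
    then show "((\<lambda>e. a i * \<omega> i / (a i * G e - lam)) has_real_derivative
        a i ^ 2 * \<omega> i * K e / (a i * G e - lam) ^ 2) (at e)"
      by (simp add: power2_eq_square ac_simps)
  qed
  then show ?thesis unfolding dF_def Ffun_def[abs_def] .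
qed

lemma G_pos: "e \<in> J \<Longrightarrow> G e > 0"
  unfolding Gfun_def
proof (rule sum_pos)
  fix j assume "e \<in> J" "j \<in> {1..n}"
  moreover have "b j > 0" "\<pi> j > 0" using b_pos pi_pos \<open>j \<in> {1..n}\<close> by auto
  ultimately show "0 < b j * \<pi> j / (1 + \<gamma> * b j * e)" using denom_pos_on_J by simp
qed (use b_indices_nonempty in auto)

lemma K_pos: "e \<in> J \<Longrightarrow> K e > 0"
  unfolding K_def
proof (rule sum_pos)
  fix j assume "e \<in> J" "j \<in> {1..n}"
  moreover have "b j > 0" "\<pi> j > 0" using b_pos pi_pos \<open>j \<in> {1..n}\<close> by auto
  moreover have "1 + \<gamma> * b j * e > 0" using denom_pos_on_J calculation(1,2) .
  ultimately show "0 < \<gamma> * b j ^ 2 * \<pi> j / (1 + \<gamma> * b j * e) ^ 2"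
    using gamma_pos by simp
qed (use b_indices_nonempty in auto)

lemma G_strict_antimono:
  assumes "x \<in> J" "x < y"
  shows "G y < G x"
  unfolding Gfun_def
proof (rule sum_strict_mono)
  fix j assume j: "j \<in> {1..n}"
  have bj: "b j > 0" "\<pi> j > 0" using b_pos pi_pos j by auto
  have "1 + \<gamma> * b j * x < 1 + \<gamma> * b j * y"
    using assms(2) gamma_pos bj by simp
  then show "b j * \<pi> j / (1 + \<gamma> * b j * y) < b j * \<pi> j / (1 + \<gamma> * b j * x)"
    using denom_pos_on_J[OF assms(1) j] bj by (intro divide_strict_left_mono) auto
qed (use b_indices_nonempty in auto)

lemma K_strict_antimono:
  assumes "x \<in> J" "x < y"
  shows "K y < K x"
  unfolding K_def
proof (rule sum_strict_mono)
  fix j assume j: "j \<in> {1..n}"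
  have bj: "b j > 0" "\<pi> j > 0" using b_pos pi_pos j by auto
  have x: "1 + \<gamma> * b j * x > 0" using denom_pos_on_J[OF assms(1) j] .
  have "1 + \<gamma> * b j * x < 1 + \<gamma> * b j * y"
    using assms(2) gamma_pos bj by simp
  then have sq: "(1 + \<gamma> * b j * x) ^ 2 < (1 + \<gamma> * b j * y) ^ 2"
    using x by (intro power_strict_mono) auto
  have "0 < (1 + \<gamma> * b j * y) ^ 2 * (1 + \<gamma> * b j * x) ^ 2"
    using sq x by (intro mult_pos_pos) auto
  moreover have "\<gamma> * b j ^ 2 * \<pi> j > 0" using gamma_pos bj by simp
  ultimately show "\<gamma> * b j ^ 2 * \<pi> j / (1 + \<gamma> * b j * y) ^ 2 < \<gamma> * b j ^ 2 * \<pi> j / (1 + \<gamma> * b j * x) ^ 2"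
    using sq by (intro divide_strict_left_mono)
qed (use b_indices_nonempty in auto)

lemma mem_I_iff: "e \<in> I lam \<longleftrightarrow> e \<in> J \<and> G e < lam / astar"
  unfolding Iset_def astar_def by simp

lemma mem_I_imp_denom_neg:
  assumes "e \<in> I lam" "i \<in> {1..p}"
  shows "a i * G e < lam"
proof -
  have e: "e \<in> J" "G e < lam / astar" using assms(1) mem_I_iff by auto
  then have "astar * G e < lam" using astar_pos by (simp add: pos_less_divide_eq mult.commute)
  moreover have "a i * G e \<le> astar * G e" using le_astar[OF assms(2)] G_pos[OF e(1)] by simp
  ultimately show ?thesis by simp
qed

lemma I_upward_closed:
  assumes "x \<in> I lam" "x \<le> y"
  shows "y \<in> I lam"
proof -
  have "x \<in> J" "G x < lam / astar" using assms(1) mem_I_iff by auto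
  moreover have "G y \<le> G x"
  proof (cases "x = y")
    case False
    then show ?thesis using G_strict_antimono[OF \<open>x \<in> J\<close>, of y] assms(2) by simp
  qed simp
  ultimately show ?thesis using J_upward_closed assms(2) mem_I_iff by auto
qed

lemma F_has_derivative_on_I:
  assumes "e \<in> I lam"
  shows "(F lam has_real_derivative dF lam e) (at e)"
proof (rule F_has_derivative)
  have "e \<in> J" using assms mem_I_iff by auto
  then show "\<forall>j\<in>{1..n}. 1 + \<gamma> * b j * e \<noteq> 0" using denom_pos_on_J by force
  show "\<forall>i\<in>{1..p}. a i * G e \<noteq> lam" using mem_I_imp_denom_neg[OF assms] by force
qed

lemma dF_strict_mono:
  assumes x: "x \<in> I lam" and xy: "x < y"
  shows "dF lam x < dF lam y"
proof -
  have y: "y \<in> I lam" using I_upward_closed[OF x] xy by simp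
  have Jx: "x \<in> J" using x mem_I_iff by auto
  have Ky: "0 < K y" using K_pos y mem_I_iff by auto
  have KK: "K y < K x" using K_strict_antimono[OF Jx xy] .
  have GG: "G y < G x" using G_strict_antimono[OF Jx xy] .
  have "(\<Sum>i\<in>{1..p}. a i ^ 2 * \<omega> i * K y / (a i * G y - lam) ^ 2)
      < (\<Sum>i\<in>{1..p}. a i ^ 2 * \<omega> i * K x / (a i * G x - lam) ^ 2)"
  proof (rule sum_strict_mono)
    fix i assume i: "i \<in> {1..p}"
    have ai: "a i > 0" "\<omega> i > 0" using a_pos omega_pos i by auto
    have ux: "lam - a i * G x > 0" using mem_I_imp_denom_neg[OF x i] by simp
    have "a i * G y < a i * G x" using GG ai by simp
    then have "(lam - a i * G x) ^ 2 < (lam - a i * G y) ^ 2"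
      using ux by (intro power_strict_mono) auto
    then have sq: "(a i * G x - lam) ^ 2 < (a i * G y - lam) ^ 2"
      by (simp add: power2_commute)
    have sx: "(a i * G x - lam) ^ 2 > 0" using ux by simp
    have "K y / (a i * G y - lam) ^ 2 < K x / (a i * G y - lam) ^ 2"
      using KK sq sx by (intro divide_strict_right_mono) auto
    also have "\<dots> \<le> K x / (a i * G x - lam) ^ 2"
    proof -
      have sy: "(a i * G y - lam) ^ 2 > 0" using sq sx by linarith
      show ?thesis using sq KK Ky mult_pos_pos[OF sy sx] by (intro divide_left_mono) auto
    qed
    finally have "K y / (a i * G y - lam) ^ 2 < K x / (a i * G x - lam) ^ 2" .
    then have "(a i ^ 2 * \<omega> i) * (K y / (a i * G y - lam) ^ 2)
        < (a i ^ 2 * \<omega> i) * (K x / (a i * G x - lam) ^ 2)"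
      using ai by (intro mult_strict_left_mono) auto
    then show "a i ^ 2 * \<omega> i * K y / (a i * G y - lam) ^ 2
        < a i ^ 2 * \<omega> i * K x / (a i * G x - lam) ^ 2" by simp
  qed (use a_indices_nonempty in auto)
  then show ?thesis unfolding dF_def by simp
qed

lemma F_roots_in_I:
  assumes e1: "e1 \<in> I lam" "F lam e1 = 0" and e2: "e1 < e2" "F lam e2 = 0"
  shows "{e \<in> I lam. F lam e = 0} = {e1, e2}" and "dF lam e1 < 0"
proof -
  have der: "\<forall>x\<in>I lam. (F lam has_real_derivative dF lam x) (at x)"
    using F_has_derivative_on_I by blast
  have up: "\<forall>x\<in>I lam. {x..} \<subseteq> I lam" using I_upward_closed by auto
  have mono: "strict_mono_on (I lam) (dF lam)" using dF_strict_mono by (intro strict_mono_onI)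
  note no_three = strict_mono_deriv_no_three_zeros[OF der up mono]
  have "e2 \<in> I lam" using I_upward_closed[OF e1(1)] e2(1) by simp
  moreover have "e \<in> {e1, e2}" if e: "e \<in> I lam" "F lam e = 0" for e
  proof (rule ccontr)
    assume "e \<notin> {e1, e2}"
    then consider "e < e1" | "e1 < e" "e < e2" | "e2 < e" by force
    then show False
    proof cases
      case 1
      show False using no_three[OF e(1) 1 e2(1) e(2) e1(2) e2(2)] .
    next
      case 2
      show False using no_three[OF e1(1) 2 e1(2) e(2) e2(2)] .
    next
      case 3
      show False using no_three[OF e1(1) e2(1) 3 e1(2) e2(2) e(2)] .
    qed
  qed
  ultimately show "{e \<in> I lam. F lam e = 0} = {e1, e2}" using e1 e2 by auto
  show "dF lam e1 < 0"
    using strict_mono_deriv_signs[OF der up mono e1(1) e2(1)] e1(2) e2(2) by simp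
qed

section \<open>The second root\<close>

lemma isCont_G: "e \<in> J \<Longrightarrow> isCont G e"
proof -
  assume "e \<in> J"
  then have "\<forall>j\<in>{1..n}. 1 + \<gamma> * b j * e \<noteq> 0" using denom_pos_on_J by force
  then show "isCont G e" using G_has_derivative DERIV_isCont by blast
qed

lemma F_eq_plus_sum:
  "F lam e = e + (\<Sum>i\<in>{1..p}. a i * \<omega> i / (lam - a i * G e))"
proof -
  have "(\<Sum>i\<in>{1..p}. a i * \<omega> i / (a i * G e - lam))
      = (\<Sum>i\<in>{1..p}. - (a i * \<omega> i / (lam - a i * G e)))"
    by (simp add: minus_divide_right)
  then show ?thesis unfolding Ffun_def by (simp add: sum_negf)
qed

lemma F_ge_single_term:
  assumes e: "e \<in> I lam" and i: "i \<in> {1..p}"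
  shows "e + a i * \<omega> i / (lam - a i * G e) \<le> F lam e"
proof -
  have "a i * \<omega> i / (lam - a i * G e) \<le> (\<Sum>k\<in>{1..p}. a k * \<omega> k / (lam - a k * G e))"
  proof (rule member_le_sum[OF i])
    fix k assume k: "k \<in> {1..p} - {i}"
    have "a k * G e < lam" "a k > 0" "\<omega> k > 0"
      using mem_I_imp_denom_neg[OF e] a_pos omega_pos k by auto
    then show "0 \<le> a k * \<omega> k / (lam - a k * G e)" by simp
  qed simp
  then show ?thesis unfolding F_eq_plus_sum by simp
qed

lemma root_in_I_neg:
  assumes e: "e \<in> I lam" and root: "F lam e = 0"
  shows "e < 0"
proof -
  have "(\<Sum>i\<in>{1..p}. 0) < (\<Sum>i\<in>{1..p}. a i * \<omega> i / (lam - a i * G e))"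
  proof (rule sum_strict_mono)
    fix i assume i: "i \<in> {1..p}"
    have "a i * G e < lam" "a i > 0" "\<omega> i > 0"
      using mem_I_imp_denom_neg[OF e i] a_pos omega_pos i by auto
    then show "0 < a i * \<omega> i / (lam - a i * G e)" by simp
  qed (use a_indices_nonempty in auto)
  then show ?thesis using root unfolding F_eq_plus_sum by simp
qed

lemma I_left_boundary:
  assumes lam: "lam > 0" and e2: "e2 \<in> I lam"
  obtains e0 where "e0 \<in> J" "e0 < e2" "G e0 = lam / astar"
proof -
  obtain j where j: "j \<in> {1..n}" "b j = bstar" by (rule bstar_attained)
  have pij: "\<pi> j > 0" using pi_pos j by auto
  define el where "el = - 1 / (\<gamma> * bstar) + \<pi> j * astar / (\<gamma> * lam)"
  have el_denom: "1 + \<gamma> * bstar * el = bstar * \<pi> j * astar / lam"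
    unfolding el_def using gamma_pos bstar_pos lam by (simp add: field_simps)
  have elJ: "el \<in> J"
    using mem_J_iff el_denom bstar_pos pij astar_pos lam by simp
  have "lam / astar = b j * \<pi> j / (1 + \<gamma> * b j * el)"
    unfolding j(2) el_denom using bstar_pos pij astar_pos lam by (simp add: field_simps)
  also have "\<dots> \<le> G el"
    unfolding Gfun_def
  proof (rule member_le_sum[OF j(1)])
    fix k assume k: "k \<in> {1..n} - {j}"
    have "1 + \<gamma> * b k * el > 0" "b k > 0" "\<pi> k > 0"
      using denom_pos_on_J[OF elJ] b_pos pi_pos k by auto
    then show "0 \<le> b k * \<pi> k / (1 + \<gamma> * b k * el)" by simp
  qed simp
  finally have G_el: "lam / astar \<le> G el" .
  have G_e2: "G e2 < lam / astar" using e2 mem_I_iff by auto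
  have "el < e2"
  proof (rule ccontr)
    assume "\<not> el < e2"
    then have "G el \<le> G e2"
      using G_strict_antimono[of e2 el] e2 mem_I_iff by (cases "e2 = el") auto
    then show False using G_el G_e2 by simp
  qed
  moreover have "continuous_on {el..e2} G"
    using isCont_G J_upward_closed[OF elJ] by (intro continuous_at_imp_continuous_on) auto
  ultimately obtain e0 where e0: "el \<le> e0" "e0 \<le> e2" "G e0 = lam / astar"
    using IVT2'[of G e2 "lam / astar" el] G_el G_e2 by auto
  moreover have "e0 \<noteq> e2" using e0(3) G_e2 by auto
  ultimately show ?thesis using that[of e0] J_upward_closed[OF elJ, of e0] by simp
qed

lemma F_pos_near_boundary:
  assumes e0: "e0 \<in> J" "G e0 = lam / astar" and c: "e0 < c"
  obtains e where "e0 < e" "e < c" "e \<in> I lam" "F lam e > 0"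
proof -
  obtain i where i: "i \<in> {1..p}" "a i = astar" by (rule astar_attained)
  have \<omega>i: "\<omega> i > 0" using omega_pos i(1) by simp
  define eps where "eps = \<omega> i * \<gamma> * bstar"
  have eps: "eps > 0" unfolding eps_def using \<omega>i gamma_pos bstar_pos by simp
  obtain d where d: "d > 0" "\<And>x. x \<noteq> e0 \<Longrightarrow> norm (x - e0) < d \<Longrightarrow> norm (G x - G e0) < eps"
    using isCont_G[OF e0(1)] eps unfolding isCont_def LIM_eq by blast
  define m where "m = min d (c - e0)"
  have m: "0 < m" "m \<le> d" "m \<le> c - e0" unfolding m_def using d(1) c by auto
  define e where "e = e0 + m / 2"
  have e: "e0 < e" "e < c" "norm (e - e0) < d" unfolding e_def using m by auto
  have eJ: "e \<in> J" using J_upward_closed[OF e0(1)] e(1) by simp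
  have Ge: "G e < G e0" using G_strict_antimono[OF e0(1) e(1)] .
  have eI: "e \<in> I lam" using mem_I_iff eJ Ge e0(2) by simp
  have "G e0 - G e < eps" using d(2)[of e] e Ge by auto
  then have "lam - astar * G e < astar * eps"
    using e0(2) astar_pos by (simp add: field_simps)
  moreover have "0 < lam - astar * G e" using mem_I_imp_denom_neg[OF eI i(1)] i(2) by simp
  ultimately have "astar * \<omega> i / (astar * eps) < astar * \<omega> i / (lam - astar * G e)"
    using astar_pos \<omega>i by (intro divide_strict_left_mono) auto
  moreover have "astar * \<omega> i / (astar * eps) = 1 / (\<gamma> * bstar)"
    unfolding eps_def using astar_pos \<omega>i gamma_pos bstar_pos by (simp add: field_simps)
  moreover have "- 1 / (\<gamma> * bstar) < e" using eJ unfolding Jset_def bstar_def by simp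
  ultimately have "F lam e > 0" using F_ge_single_term[OF eI i(1)] i(2) by simp
  then show ?thesis using that e eI by blast
qed

lemma second_root:
  assumes lam: "lam > 0" and e2: "e2 \<in> I lam" "F lam e2 = 0" "dF lam e2 > 0"
  obtains e1 where "e1 \<in> I lam" "e1 < e2" "F lam e1 = 0"
proof -
  obtain e0 where e0: "e0 \<in> J" "e0 < e2" "G e0 = lam / astar"
    using I_left_boundary[OF lam e2(1)] .
  obtain h where h: "h > 0" "\<And>t. t > 0 \<Longrightarrow> t < h \<Longrightarrow> F lam (e2 - t) < F lam e2"
    using DERIV_pos_inc_left[OF F_has_derivative_on_I[OF e2(1)] e2(3)] by blast
  define m where "m = min h (e2 - e0)"
  have m: "0 < m" "m \<le> h" "m \<le> e2 - e0" unfolding m_def using h(1) e0(2) by auto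
  define e3 where "e3 = e2 - m / 2"
  have e3: "e0 < e3" "e3 < e2" unfolding e3_def using m by auto
  have "F lam e3 < 0" unfolding e3_def using h(2)[of "m / 2"] m e2(2) by simp
  obtain e' where e': "e0 < e'" "e' < e3" "e' \<in> I lam" "F lam e' > 0"
    using F_pos_near_boundary[OF e0(1,3) e3(1)] .
  have "isCont (F lam) x" if "e' \<le> x" for x
    using DERIV_isCont[OF F_has_derivative_on_I[OF I_upward_closed[OF e'(3) that]]] .
  then have "continuous_on {e'..e3} (F lam)" by (intro continuous_at_imp_continuous_on) auto
  then obtain e1 where e1: "e' \<le> e1" "e1 \<le> e3" "F lam e1 = 0"
    using IVT2'[of "F lam" e3 0 e'] \<open>F lam e3 < 0\<close> e'(2,4) by auto
  then show ?thesis using that I_upward_closed[OF e'(3) e1(1)] e3(2) by simp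
qed

lemma two_roots_in_I:
  assumes "lam > 0" "e2 \<in> I lam" "F lam e2 = 0" "dF lam e2 > 0"
  shows "\<exists>e1. e1 < e2 \<and> e2 < 0 \<and> {e \<in> I lam. F lam e = 0} = {e1, e2} \<and>
           (\<forall>e\<in>{e1, e2}. deriv (F lam) e > 0 \<longleftrightarrow> e = e2)"
proof -
  obtain e1 where e1: "e1 \<in> I lam" "e1 < e2" "F lam e1 = 0" using second_root[OF assms] .
  have "deriv (F lam) e1 = dF lam e1" "deriv (F lam) e2 = dF lam e2"
    using DERIV_imp_deriv F_has_derivative_on_I e1(1) assms(2) by blast+
  then show ?thesis
    using F_roots_in_I[OF e1(1,3) e1(2) assms(3)] root_in_I_neg[OF assms(2,3)] assms(4) e1(2)
    by auto
qed

section \<open>The root for large \<open>\<lambda>\<close>\<close>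

lemma root_times_G:
  assumes nonsing: "\<forall>i\<in>{1..p}. a i * G e \<noteq> lam" and root: "F lam e = 0"
  shows "e * G e = 1 + lam * (\<Sum>i\<in>{1..p}. \<omega> i / (a i * G e - lam))"
proof -
  have e: "e = (\<Sum>i\<in>{1..p}. a i * \<omega> i / (a i * G e - lam))"
    using root unfolding Ffun_def by simp
  have "e * G e = (\<Sum>i\<in>{1..p}. a i * \<omega> i / (a i * G e - lam) * G e)"
    by (subst e) (simp add: sum_distrib_right)
  also have "\<dots> = (\<Sum>i\<in>{1..p}. \<omega> i + lam * (\<omega> i / (a i * G e - lam)))"
  proof (rule sum.cong)
    fix i assume "i \<in> {1..p}"
    then have "a i * G e - lam \<noteq> 0" using nonsing by auto
    then show "a i * \<omega> i / (a i * G e - lam) * G e = \<omega> i + lam * (\<omega> i / (a i * G e - lam))"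
      by (simp add: field_simps)
  qed simp
  also have "\<dots> = 1 + lam * (\<Sum>i\<in>{1..p}. \<omega> i / (a i * G e - lam))"
    using omega_sum by (simp add: sum.distrib sum_distrib_left)
  finally show ?thesis .
qed

lemma root_abs_le_of_G_small:
  assumes lam: "lam > 0" and G: "\<bar>G e\<bar> \<le> lam / (2 * astar)" and root: "F lam e = 0"
  shows "\<bar>e\<bar> \<le> 2 * astar / lam"
proof -
  have e: "e = (\<Sum>i\<in>{1..p}. a i * \<omega> i / (a i * G e - lam))"
    using root unfolding Ffun_def by simp
  have "\<bar>e\<bar> \<le> (\<Sum>i\<in>{1..p}. \<bar>a i * \<omega> i / (a i * G e - lam)\<bar>)"
    by (subst e) (rule sum_abs)
  also have "\<dots> \<le> (\<Sum>i\<in>{1..p}. \<omega> i * (2 * astar / lam))"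
  proof (rule sum_mono)
    fix i assume i: "i \<in> {1..p}"
    have ai: "a i > 0" "\<omega> i > 0" "a i \<le> astar" using a_pos omega_pos le_astar i by auto
    have "a i * \<bar>G e\<bar> \<le> astar * (lam / (2 * astar))"
      using G ai astar_pos by (intro mult_mono) auto
    then have "\<bar>a i * G e\<bar> \<le> lam / 2" using ai astar_pos by (simp add: abs_mult)
    then have denom: "lam / 2 \<le> \<bar>a i * G e - lam\<bar>" by linarith
    have "\<bar>a i * \<omega> i / (a i * G e - lam)\<bar> = a i * \<omega> i / \<bar>a i * G e - lam\<bar>"
      using ai by (simp add: abs_divide abs_mult)
    also have "\<dots> \<le> a i * \<omega> i / (lam / 2)"
    proof -
      have "0 < \<bar>a i * G e - lam\<bar> * (lam / 2)" using denom lam by (intro mult_pos_pos) auto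
      then show ?thesis using denom ai by (intro divide_left_mono) auto
    qed
    also have "\<dots> \<le> \<omega> i * (2 * astar / lam)"
      using ai lam by (simp add: field_simps)
    finally show "\<bar>a i * \<omega> i / (a i * G e - lam)\<bar> \<le> \<omega> i * (2 * astar / lam)" .
  qed
  also have "\<dots> = (\<Sum>i\<in>{1..p}. \<omega> i) * (2 * astar / lam)"
    by (rule sum_distrib_right[symmetric])
  also have "\<dots> = 2 * astar / lam" using omega_sum by simp
  finally show ?thesis .
qed

text \<open>Where \<open>|G(e)|\<close> is large, \<open>|e|\<close> is small because \<open>e G(e) = 1 + \<lambda>s\<close> is bounded.\<close>

lemma root_abs_le:
  assumes lam: "lam > 0" and nonsing: "\<forall>i\<in>{1..p}. a i * G e \<noteq> lam" and root: "F lam e = 0"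
    and s: "\<bar>1 + lam * (\<Sum>i\<in>{1..p}. \<omega> i / (a i * G e - lam))\<bar> \<le> 1"
  shows "\<bar>e\<bar> \<le> 2 * astar / lam"
proof (cases "\<bar>G e\<bar> \<le> lam / (2 * astar)")
  case True
  then show ?thesis using root_abs_le_of_G_small[OF lam _ root] by simp
next
  case False
  have lp: "lam / (2 * astar) > 0" using lam astar_pos by simp
  have "\<bar>e\<bar> * \<bar>G e\<bar> \<le> 1" using root_times_G[OF nonsing root] s by (simp add: abs_mult)
  then have "\<bar>e\<bar> \<le> 1 / \<bar>G e\<bar>" using False lp by (simp add: pos_le_divide_eq)
  also have "\<dots> \<le> 1 / (lam / (2 * astar))"
  proof -
    have "0 < \<bar>G e\<bar> * (lam / (2 * astar))" using False lp by (intro mult_pos_pos) auto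
    then show ?thesis using False by (intro divide_left_mono) auto
  qed
  finally show ?thesis by simp
qed

lemma denom_ge_half:
  assumes e: "\<gamma> * bstar * \<bar>e\<bar> \<le> 1 / 2" and j: "j \<in> {1..n}"
  shows "1 / 2 \<le> 1 + \<gamma> * b j * e"
proof -
  have bj: "0 < b j" "b j \<le> bstar" using b_pos le_bstar j by auto
  have "\<bar>\<gamma> * b j * e\<bar> = \<gamma> * b j * \<bar>e\<bar>" using gamma_pos bj by (simp add: abs_mult)
  also have "\<dots> \<le> \<gamma> * bstar * \<bar>e\<bar>"
    using gamma_pos bj by (intro mult_right_mono mult_left_mono) auto
  finally show ?thesis using e by linarith
qed

lemma G_le_of_denom_ge_half:
  assumes "\<forall>j\<in>{1..n}. 1 / 2 \<le> 1 + \<gamma> * b j * e"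
  shows "G e \<le> 2 * bstar"
proof -
  have "G e \<le> (\<Sum>j\<in>{1..n}. \<pi> j * (2 * bstar))"
    unfolding Gfun_def
  proof (rule sum_mono)
    fix j assume j: "j \<in> {1..n}"
    have bj: "0 < b j" "b j \<le> bstar" "0 < \<pi> j" using b_pos le_bstar pi_pos j by auto
    have half: "1 / 2 \<le> 1 + \<gamma> * b j * e" using assms j by blast
    have "b j * \<pi> j / (1 + \<gamma> * b j * e) \<le> b j * \<pi> j / (1 / 2)"
      using half bj by (intro divide_left_mono) auto
    also have "\<dots> \<le> \<pi> j * (2 * bstar)" using bj by simp
    finally show "b j * \<pi> j / (1 + \<gamma> * b j * e) \<le> \<pi> j * (2 * bstar)" .
  qed
  then show ?thesis using pi_sum by (simp add: sum_distrib_right[symmetric])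
qed

lemma K_le_of_denom_ge_half:
  assumes "\<forall>j\<in>{1..n}. 1 / 2 \<le> 1 + \<gamma> * b j * e"
  shows "K e \<le> 4 * \<gamma> * bstar ^ 2"
proof -
  have "K e \<le> (\<Sum>j\<in>{1..n}. \<pi> j * (4 * \<gamma> * bstar ^ 2))"
    unfolding K_def
  proof (rule sum_mono)
    fix j assume j: "j \<in> {1..n}"
    have bj: "0 < b j" "b j \<le> bstar" "0 < \<pi> j" using b_pos le_bstar pi_pos j by auto
    have half: "1 / 2 \<le> 1 + \<gamma> * b j * e" using assms j by blast
    then have "(1 / 2) ^ 2 \<le> (1 + \<gamma> * b j * e) ^ 2" by (intro power_mono) auto
    moreover have "0 < (1 + \<gamma> * b j * e) ^ 2 * (1 / 2) ^ 2" using half by simp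
    ultimately have "\<gamma> * b j ^ 2 * \<pi> j / (1 + \<gamma> * b j * e) ^ 2 \<le> \<gamma> * b j ^ 2 * \<pi> j / (1 / 2) ^ 2"
      using bj gamma_pos by (intro divide_left_mono) auto
    also have "\<dots> = \<pi> j * (4 * \<gamma> * b j ^ 2)" by (simp add: power2_eq_square)
    also have "\<dots> \<le> \<pi> j * (4 * \<gamma> * bstar ^ 2)"
      using bj gamma_pos by (intro mult_left_mono power_mono) auto
    finally show "\<gamma> * b j ^ 2 * \<pi> j / (1 + \<gamma> * b j * e) ^ 2 \<le> \<pi> j * (4 * \<gamma> * bstar ^ 2)" .
  qed
  then show ?thesis using pi_sum by (simp add: sum_distrib_right[symmetric])
qed

lemma dF_pos_of_bounds:
  assumes e: "e \<in> J" and G: "G e \<le> g" and K: "K e \<le> k"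
    and g: "2 * astar * g \<le> lam" and k: "4 * astar ^ 2 * k < lam ^ 2"
  shows "dF lam e > 0"
proof -
  have Gpos: "G e > 0" and Kpos: "K e > 0" using G_pos K_pos e by auto
  have kpos: "k > 0" using Kpos K by simp
  have "0 < 2 * astar * g" using Gpos G astar_pos by simp
  then have lam: "lam > 0" using g by linarith
  have "(\<Sum>i\<in>{1..p}. a i ^ 2 * \<omega> i * K e / (a i * G e - lam) ^ 2)
      \<le> (\<Sum>i\<in>{1..p}. \<omega> i * (4 * astar ^ 2 * k / lam ^ 2))"
  proof (rule sum_mono)
    fix i assume i: "i \<in> {1..p}"
    have ai: "0 < a i" "a i \<le> astar" "0 < \<omega> i" using a_pos le_astar omega_pos i by auto
    have "a i * G e \<le> astar * g" using ai Gpos G astar_pos by (intro mult_mono) auto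
    then have "lam / 2 \<le> lam - a i * G e" using g by linarith
    then have "(lam / 2) ^ 2 \<le> (a i * G e - lam) ^ 2"
      using lam by (simp add: power2_commute power_mono)
    moreover have "a i ^ 2 * \<omega> i * K e \<le> astar ^ 2 * \<omega> i * k"
      using ai Kpos K by (intro mult_mono power_mono) auto
    ultimately have "a i ^ 2 * \<omega> i * K e / (a i * G e - lam) ^ 2 \<le> astar ^ 2 * \<omega> i * k / (lam / 2) ^ 2"
      using lam ai kpos by (intro frac_le) auto
    also have "\<dots> = \<omega> i * (4 * astar ^ 2 * k / lam ^ 2)" by (simp add: field_simps)
    finally show "a i ^ 2 * \<omega> i * K e / (a i * G e - lam) ^ 2 \<le> \<omega> i * (4 * astar ^ 2 * k / lam ^ 2)" .
  qed
  also have "\<dots> = (\<Sum>i\<in>{1..p}. \<omega> i) * (4 * astar ^ 2 * k / lam ^ 2)"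
    by (rule sum_distrib_right[symmetric])
  also have "\<dots> = 4 * astar ^ 2 * k / lam ^ 2" using omega_sum by simp
  also have "\<dots> < 1" using k lam by simp
  finally show ?thesis unfolding dF_def by simp
qed

lemma small_root_good:
  assumes lam: "4 * astar * bstar * (1 + \<gamma>) < lam" and e: "\<bar>e\<bar> \<le> 2 * astar / lam"
  shows "1 + \<gamma> * bstar * e > 0" "astar * G e < lam" "dF lam e > 0"
proof -
  have AB: "astar * bstar > 0" using astar_pos bstar_pos by simp
  have gAB: "\<gamma> * astar * bstar > 0" using mult_pos_pos[OF gamma_pos AB] by (simp add: mult.assoc)
  have "4 * astar * bstar * (1 + \<gamma>) = 4 * (astar * bstar) + 4 * (\<gamma> * astar * bstar)"
    by (simp add: algebra_simps)
  then have lam1: "4 * (astar * bstar) < lam" and lam2: "4 * (\<gamma> * astar * bstar) < lam"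
    using lam AB gAB by linarith+
  have lam0: "lam > 0" using lam1 AB by linarith
  have "\<gamma> * bstar * \<bar>e\<bar> \<le> \<gamma> * bstar * (2 * astar / lam)"
    using e gamma_pos bstar_pos by (intro mult_left_mono) auto
  also have "\<dots> \<le> 1 / 2" using lam2 lam0 by (simp add: field_simps)
  finally have small: "\<gamma> * bstar * \<bar>e\<bar> \<le> 1 / 2" .
  moreover have "\<bar>\<gamma> * bstar * e\<bar> = \<gamma> * bstar * \<bar>e\<bar>"
    using gamma_pos bstar_pos by (simp add: abs_mult)
  ultimately show "1 + \<gamma> * bstar * e > 0" by linarith
  then have eJ: "e \<in> J" using mem_J_iff by simp
  have half: "\<forall>j\<in>{1..n}. 1 / 2 \<le> 1 + \<gamma> * b j * e" using denom_ge_half[OF small] by blast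
  have G: "G e \<le> 2 * bstar" using G_le_of_denom_ge_half[OF half] .
  have "astar * G e \<le> astar * (2 * bstar)" using G astar_pos by simp
  then show "astar * G e < lam" using lam1 AB by linarith
  have "4 * astar ^ 2 * (4 * \<gamma> * bstar ^ 2) < lam ^ 2"
  proof -
    have "(1 + \<gamma>) ^ 2 = 1 + 2 * \<gamma> + \<gamma> * \<gamma>" by (simp add: power2_eq_square algebra_simps)
    moreover have "0 < \<gamma> * \<gamma>" using gamma_pos by simp
    ultimately have "\<gamma> < (1 + \<gamma>) ^ 2" using gamma_pos by linarith
    then have "16 * (astar * bstar) ^ 2 * \<gamma> < 16 * (astar * bstar) ^ 2 * (1 + \<gamma>) ^ 2"
      using AB by (intro mult_strict_left_mono) auto
    then have "4 * astar ^ 2 * (4 * \<gamma> * bstar ^ 2) < (4 * astar * bstar * (1 + \<gamma>)) ^ 2"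
      by (simp add: power_mult_distrib ac_simps)
    also have "\<dots> < lam ^ 2" using lam AB gamma_pos by (intro power_strict_mono) auto
    finally show ?thesis .
  qed
  then show "dF lam e > 0"
    using dF_pos_of_bounds[OF eJ G K_le_of_denom_ge_half[OF half]] lam1 by simp
qed

section \<open>Continuation along the root curve\<close>

lemma F_along_curve_has_derivative:
  fixes ee :: "real \<Rightarrow> real"
  assumes ee: "(ee has_real_derivative E) (at lam)"
    and pole: "\<forall>j\<in>{1..n}. 1 + \<gamma> * b j * ee lam \<noteq> 0"
    and nonsing: "\<forall>i\<in>{1..p}. a i * G (ee lam) \<noteq> lam"
  shows "((\<lambda>l. F l (ee l)) has_real_derivative
           E * dF lam (ee lam) - (\<Sum>i\<in>{1..p}. a i * \<omega> i / (a i * G (ee lam) - lam) ^ 2)) (at lam)"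
proof -
  define e where "e = ee lam"
  have GE: "((\<lambda>l. G (ee l)) has_real_derivative - K e * E) (at lam)"
    unfolding e_def using DERIV_chain2[OF G_has_derivative[OF pole] ee] .
  have "((\<lambda>l. ee l - (\<Sum>i\<in>{1..p}. a i * \<omega> i / (a i * G (ee l) - l))) has_real_derivative
      E - (\<Sum>i\<in>{1..p}. a i * \<omega> i * (a i * K e * E + 1) / (a i * G e - lam) ^ 2)) (at lam)"
  proof (intro derivative_intros DERIV_sum ee)
    fix i assume "i \<in> {1..p}"
    then have "a i * G e - lam \<noteq> 0" using nonsing unfolding e_def by auto
    then show "((\<lambda>l. a i * \<omega> i / (a i * G (ee l) - l)) has_real_derivative
        a i * \<omega> i * (a i * K e * E + 1) / (a i * G e - lam) ^ 2) (at lam)"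
      unfolding e_def
      by (auto intro!: derivative_eq_intros GE[unfolded e_def] simp: power2_eq_square field_simps)
  qed
  moreover have "(\<Sum>i\<in>{1..p}. a i * \<omega> i * (a i * K e * E + 1) / (a i * G e - lam) ^ 2)
      = E * (\<Sum>i\<in>{1..p}. a i ^ 2 * \<omega> i * K e / (a i * G e - lam) ^ 2)
        + (\<Sum>i\<in>{1..p}. a i * \<omega> i / (a i * G e - lam) ^ 2)"
    unfolding sum_distrib_left sum.distrib[symmetric]
    by (rule sum.cong) (simp_all add: divide_inverse algebra_simps power2_eq_square)
  ultimately show ?thesis
    unfolding Ffun_def dF_def e_def by (simp add: algebra_simps)
qed

lemma dF_nonzero_on_root_curve:
  fixes ee :: "real \<Rightarrow> real"
  assumes lam: "lam > L" and diff: "ee differentiable (at lam)"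
    and pole: "\<forall>j\<in>{1..n}. 1 + \<gamma> * b j * ee lam \<noteq> 0"
    and nonsing: "\<forall>i\<in>{1..p}. a i * G (ee lam) \<noteq> lam"
    and root: "\<forall>l>L. F l (ee l) = 0"
  shows "dF lam (ee lam) \<noteq> 0"
proof -
  obtain E where ee: "(ee has_real_derivative E) (at lam)"
    using diff real_differentiable_def by blast
  have "((\<lambda>l. F l (ee l)) has_real_derivative 0) (at lam)"
    by (rule has_field_derivative_transform_within_open[of "\<lambda>l. 0" 0 lam "{L<..}"])
      (use lam root in auto)
  from DERIV_unique[OF F_along_curve_has_derivative[OF ee pole nonsing] this]
  have "E * dF lam (ee lam) = (\<Sum>i\<in>{1..p}. a i * \<omega> i / (a i * G (ee lam) - lam) ^ 2)"
    by simp
  moreover have "(\<Sum>i\<in>{1..p}. a i * \<omega> i / (a i * G (ee lam) - lam) ^ 2) > 0"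
  proof (rule sum_pos)
    fix i assume i: "i \<in> {1..p}"
    have "a i * G (ee lam) - lam \<noteq> 0" "a i > 0" "\<omega> i > 0"
      using nonsing a_pos omega_pos i by auto
    then show "0 < a i * \<omega> i / (a i * G (ee lam) - lam) ^ 2" by simp
  qed (use a_indices_nonempty in auto)
  ultimately show ?thesis by auto
qed

lemma root_curve_good:
  fixes ee :: "real \<Rightarrow> real"
  assumes diff: "\<forall>l>L. ee differentiable (at l)"
    and pole: "\<forall>l>L. \<forall>j\<in>{1..n}. 1 + \<gamma> * b j * ee l \<noteq> 0"
    and nonsing: "\<forall>l>L. \<forall>i\<in>{1..p}. a i * G (ee l) \<noteq> l"
    and root: "\<forall>l>L. F l (ee l) = 0"
    and l0: "l0 > L" "4 * astar * bstar * (1 + \<gamma>) < l0" "\<bar>ee l0\<bar> \<le> 2 * astar / l0"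
    and lam: "lam > L"
  shows "ee lam \<in> I lam \<and> dF lam (ee lam) > 0"
proof -
  note start = small_root_good[OF l0(2,3)]
  have "isCont ee l" if "l > L" for l
    using diff that differentiable_imp_continuous_within by blast
  then have ee: "continuous_on {L<..} ee" by (intro continuous_at_imp_continuous_on) auto
  have "continuous_on {L<..} (\<lambda>l. G (ee l))"
    unfolding Gfun_def using ee pole by (intro continuous_intros) auto
  moreover have "continuous_on {L<..} (\<lambda>l. K (ee l))"
    unfolding K_def using ee pole by (intro continuous_intros) auto
  ultimately have cont_dF: "continuous_on {L<..} (\<lambda>l. dF l (ee l))"
    unfolding dF_def using nonsing by (intro continuous_intros) auto
  obtain j where j: "j \<in> {1..n}" "b j = bstar" by (rule bstar_attained)
  obtain i where i: "i \<in> {1..p}" "a i = astar" by (rule astar_attained)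
  have "1 + \<gamma> * bstar * ee lam > 0"
  proof (rule continuous_on_greaterThan_pos[where f = "\<lambda>l. 1 + \<gamma> * bstar * ee l"])
    show "continuous_on {L<..} (\<lambda>l. 1 + \<gamma> * bstar * ee l)" using ee by (intro continuous_intros)
    show "\<forall>x>L. 1 + \<gamma> * bstar * ee x \<noteq> 0" using pole j(1) unfolding j(2)[symmetric] by blast
  qed (use l0(1) start(1) lam in auto)
  moreover have "lam - astar * G (ee lam) > 0"
  proof (rule continuous_on_greaterThan_pos[where f = "\<lambda>l. l - astar * G (ee l)"])
    show "continuous_on {L<..} (\<lambda>l. l - astar * G (ee l))"
      using \<open>continuous_on {L<..} (\<lambda>l. G (ee l))\<close> by (intro continuous_intros)
    show "\<forall>x>L. x - astar * G (ee x) \<noteq> 0"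
      using nonsing i(1) unfolding i(2)[symmetric] by (metis eq_iff_diff_eq_0)
  qed (use l0(1) start(2) lam in auto)
  moreover have "dF lam (ee lam) > 0"
  proof (rule continuous_on_greaterThan_pos[where f = "\<lambda>l. dF l (ee l)", OF cont_dF])
    show "\<forall>x>L. dF x (ee x) \<noteq> 0"
      using dF_nonzero_on_root_curve diff pole nonsing root by blast
  qed (use l0(1) start(3) lam in auto)
  ultimately show ?thesis using mem_I_iff mem_J_iff astar_pos by (simp add: less_divide_eq mult.commute)
qed

end

theorem mainTheorem15:
  fixes \<gamma> :: real and p n :: nat and a \<omega> b \<pi> :: "nat \<Rightarrow> real"
    and \<mu> :: "real measure" and lamstar :: real and ee :: "real \<Rightarrow> real"
  assumes gamma_pos: "\<gamma> > 0"
    and a_pos: "\<forall>i\<in>{1..p}. a i > 0" and omega_pos: "\<forall>i\<in>{1..p}. \<omega> i > 0"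
    and omega_sum: "(\<Sum>i\<in>{1..p}. \<omega> i) = 1"
    and b_pos: "\<forall>j\<in>{1..n}. b j > 0" and pi_pos: "\<forall>j\<in>{1..n}. \<pi> j > 0"
    and pi_sum: "(\<Sum>j\<in>{1..n}. \<pi> j) = 1"
    and mu_prob: "prob_space \<mu>" and mu_borel: "sets \<mu> = sets borel"
    and mu_compact: "compact (msupport \<mu>)"
    and mu_nonneg: "msupport \<mu> \<subseteq> {0..}"
    and lamstar_endpoint: "lamstar \<in> msupport \<mu>" "\<forall>t\<in>msupport \<mu>. t \<le> lamstar"
    and lamstar_pos: "lamstar > 0"
    and ee_smooth: "\<forall>lam>lamstar. \<forall>k. (deriv ^^ k) ee differentiable (at lam)"
    and ee_nopole: "\<forall>lam>lamstar. \<forall>j\<in>{1..n}. 1 + \<gamma> * b j * ee lam \<noteq> 0"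
    and ee_nonsing: "\<forall>lam>lamstar. \<forall>i\<in>{1..p}. a i * Gfun \<gamma> n b \<pi> (ee lam) \<noteq> lam"
    and ee_stieltjes: "\<forall>lam>lamstar. stieltjes \<mu> lam =
           (\<Sum>i\<in>{1..p}. \<omega> i / (a i * Gfun \<gamma> n b \<pi> (ee lam) - lam))"
    and ee_root: "\<forall>lam>lamstar. Ffun \<gamma> p a \<omega> n b \<pi> lam (ee lam) = 0"
  shows "\<forall>lam>lamstar. \<exists>e1 e2. e1 < e2 \<and> e2 < 0 \<and>
           {e \<in> Iset \<gamma> p a n b \<pi> lam. Ffun \<gamma> p a \<omega> n b \<pi> lam e = 0} = {e1, e2} \<and>
           ee lam = e2 \<and>
           (\<forall>e\<in>{e1, e2}. deriv (Ffun \<gamma> p a \<omega> n b \<pi> lam) e > 0 \<longleftrightarrow> e = e2)"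
proof -
  interpret master_equation \<gamma> p n a \<omega> b \<pi>
    using gamma_pos a_pos omega_pos omega_sum b_pos pi_pos pi_sum by unfold_locales
  have diff: "\<forall>l>lamstar. ee differentiable (at l)"
    using ee_smooth funpow_0 by metis
  define l0 where "l0 = 2 * lamstar + 4 * astar * bstar * (1 + \<gamma>)"
  have "4 * astar * bstar * (1 + \<gamma>) > 0" using astar_pos bstar_pos gamma_pos by simp
  then have l0: "lamstar < l0" "2 * lamstar \<le> l0" "4 * astar * bstar * (1 + \<gamma>) < l0"
    unfolding l0_def using lamstar_pos by linarith+
  have "\<bar>1 + l0 * stieltjes \<mu> l0\<bar> \<le> 1"
    using abs_one_plus_scaled_stieltjes_le[OF mu_prob mu_borel lamstar_endpoint(2) lamstar_pos l0(2)] .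
  then have "\<bar>ee l0\<bar> \<le> 2 * astar / l0"
    using root_abs_le ee_nonsing ee_root ee_stieltjes l0(1) lamstar_pos by simp
  then have "ee lam \<in> I lam \<and> dF lam (ee lam) > 0" if "lam > lamstar" for lam
    using root_curve_good[OF diff ee_nopole ee_nonsing ee_root l0(1,3) _ that] by blast
  then show ?thesis
    using two_roots_in_I ee_root lamstar_pos by fastforce
qed

end
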